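(* Let $q$ be a self-join-free Boolean conjunctive query such that $q$ is saturated and the attack graph of $q$ contains no strong cycle. Let $\mathcal{S}$ be an initial strong component in the attack graph of $q$ with $|\mathcal{S}|\ge 2$. Then the M-graph of $q$ contains a cycle all of whose atoms belong to $\mathcal{S}$.
   Context: Every relation name has a signature $[n,k]$ ($1\le k\le n$; primary-key positions $1,\dots,k$) and a mode in $\{\mathsf{c},\mathsf{i}\}$. For an atom $F$, $\mathrm{key}(F)$ = variables at primary-key positions, $\mathrm{vars}(F)$ = all its variables. A self-join-free Boolean conjunctive query is a finite set of atoms with distinct relation names. $\mathcal{K}(p)=\{\mathrm{key}(F)\to\mathrm{vars}(F)\mid F\in p\}$ (FDs over variables); $q^{\mathsf{c}}$ = atoms of $q$ of mode $\mathsf{c}$; $F^{+,q}$ = variables $x$ with $\mathcal{K}(q\setminus\{F\})\cup\mathcal{K}(q^{\mathsf{c}})\models\mathrm{key}(F)\to x$. Attack graph: vertices atoms of $q$, edge $F\to G$ ($F\ne G$) iff there are atoms $F_0=F,\dots,F_\ell=G$ of $q$ and variables $x_i\in(\mathrm{vars}(F_{i-1})\cap\mathrm{vars}(F_i))\setminus F^{+,q}$. Attack weak if $\mathcal{K}(q)\models\mathrm{key}(F)\to\mathrm{key}(G)$, else strong; cycle strong if it contains a strong attack. A strong component is initial if no edge enters it from another strong component. $F$ attacks a variable $x$ if $F$ attacks $N(x)$ in $q\cup\{N(x)\}$ ($N$ fresh, signature $[1,1]$). A sequential proof for $\mathcal{K}(q)\models Z\to w$: atoms $F_1,\dots,F_\ell$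 of $q$ with $\mathrm{key}(F_i)\subseteq Z\cup\bigcup_{j<i}\mathrm{vars}(F_j)$ and $w\in\mathrm{vars}(F_k)$ for some $k$. $Z\to w$ is internal to $q$ if some such proof has no atom attacking a variable in $Z\cup\{w\}$, and $Z\subseteq\mathrm{vars}(F)$ for some $F\in q$. $q$ is saturated if $\mathcal{K}(q^{\mathsf{c}})\models\sigma$ for every $\sigma$ internal to $q$. The M-graph of $q$ has the atoms of $q$ as vertices and an edge $F\to G$ ($F\ne G$) iff $\mathcal{K}(q^{\mathsf{c}})\models\mathrm{vars}(F)\to\mathrm{key}(G)$. *)

theory Defs
  imports Main "HOL-Library.Infinite_Typeclass"
begin

datatype ('v, 'c) trm = Var 'v | Cst 'c

datatype mode = ModeC | ModeI

text \<open>An atom records its relation name, the number k of primary-key positions of the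
  relation's signature [n,k] (n is the length of the argument list), its argument list,
  and the mode of its relation name.\<close>
datatype ('r, 'v, 'c) atom =
  Atom (rel: 'r) (keylen: nat) (args: "('v, 'c) trm list") (amode: mode)

definition wf_atom :: "('r, 'v, 'c) atom \<Rightarrow> bool" where
  "wf_atom F \<longleftrightarrow> 1 \<le> keylen F \<and> keylen F \<le> length (args F)"

definition key :: "('r, 'v, 'c) atom \<Rightarrow> 'v set" where
  "key F = {x. Var x \<in> set (take (keylen F) (args F))}"

definition vars :: "('r, 'v, 'c) atom \<Rightarrow> 'v set" where
  "vars F = {x. Var x \<in> set (args F)}"

definition sjf_query :: "('r, 'v, 'c) atom set \<Rightarrow> bool" where
  "sjf_query q \<longleftrightarrow> finite q \<and> (\<forall>F\<in>q. wf_atom F) \<and> inj_on rel q"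

definition qc :: "('r, 'v, 'c) atom set \<Rightarrow> ('r, 'v, 'c) atom set" where
  "qc q = {F \<in> q. amode F = ModeC}"

type_synonym 'v fd = "'v set \<times> 'v set"

definition K :: "('r, 'v, 'c) atom set \<Rightarrow> 'v fd set" where
  "K p = (\<lambda>F. (key F, vars F)) ` p"

inductive_set fd_closure :: "'v fd set \<Rightarrow> 'v set \<Rightarrow> 'v set" for \<Sigma> X where
  base: "x \<in> X \<Longrightarrow> x \<in> fd_closure \<Sigma> X"
| step: "(A, B) \<in> \<Sigma> \<Longrightarrow> \<forall>a\<in>A. a \<in> fd_closure \<Sigma> X \<Longrightarrow> y \<in> B \<Longrightarrow> y \<in> fd_closure \<Sigma> X"

definition fd_entails :: "'v fd set \<Rightarrow> 'v set \<Rightarrow> 'v set \<Rightarrow> bool" where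
  "fd_entails \<Sigma> X Y \<longleftrightarrow> Y \<subseteq> fd_closure \<Sigma> X"

definition plusq :: "('r, 'v, 'c) atom set \<Rightarrow> ('r, 'v, 'c) atom \<Rightarrow> 'v set" where
  "plusq q F = {x. fd_entails (K (q - {F}) \<union> K (qc q)) (key F) {x}}"

definition attacks :: "('r, 'v, 'c) atom set \<Rightarrow> ('r, 'v, 'c) atom \<Rightarrow> ('r, 'v, 'c) atom \<Rightarrow> bool" where
  "attacks q F G \<longleftrightarrow> F \<in> q \<and> G \<in> q \<and> F \<noteq> G \<and>
     (\<exists>fs. length fs \<ge> 2 \<and> hd fs = F \<and> last fs = G \<and> set fs \<subseteq> q \<and>
        (\<forall>i. i + 1 < length fs \<longrightarrow>
           (vars (fs ! i) \<inter> vars (fs ! (i + 1))) - plusq q F \<noteq> {}))"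

definition strong_attack :: "('r, 'v, 'c) atom set \<Rightarrow> ('r, 'v, 'c) atom \<Rightarrow> ('r, 'v, 'c) atom \<Rightarrow> bool" where
  "strong_attack q F G \<longleftrightarrow> attacks q F G \<and> \<not> fd_entails (K q) (key F) (key G)"

definition is_cycle :: "('a \<Rightarrow> 'a \<Rightarrow> bool) \<Rightarrow> 'a list \<Rightarrow> bool" where
  "is_cycle E cs \<longleftrightarrow> length cs \<ge> 2 \<and> distinct cs \<and>
     (\<forall>i < length cs. E (cs ! i) (cs ! ((i + 1) mod length cs)))"

definition has_strong_cycle :: "('r, 'v, 'c) atom set \<Rightarrow> bool" where
  "has_strong_cycle q \<longleftrightarrow> (\<exists>cs. is_cycle (attacks q) cs \<and>
     (\<exists>i < length cs. strong_attack q (cs ! i) (cs ! ((i + 1) mod length cs))))"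

definition strong_component :: "('r, 'v, 'c) atom set \<Rightarrow> ('r, 'v, 'c) atom set \<Rightarrow> bool" where
  "strong_component q S \<longleftrightarrow> S \<subseteq> q \<and> S \<noteq> {} \<and>
     (\<forall>F\<in>S. \<forall>G\<in>S. (attacks q)\<^sup>*\<^sup>* F G) \<and>
     (\<forall>F\<in>S. \<forall>G\<in>q. (attacks q)\<^sup>*\<^sup>* F G \<and> (attacks q)\<^sup>*\<^sup>* G F \<longrightarrow> G \<in> S)"

definition initial_component :: "('r, 'v, 'c) atom set \<Rightarrow> ('r, 'v, 'c) atom set \<Rightarrow> bool" where
  "initial_component q S \<longleftrightarrow> strong_component q S \<and>
     (\<forall>F G. attacks q F G \<and> G \<in> S \<longrightarrow> F \<in> S)"

text \<open>The fresh atom N(x): fresh relation name (not used in q), signature [1,1].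
  Its mode is irrelevant (its FD {x} \<rightarrow> {x} is trivial); we take c.\<close>
definition fresh_atom :: "('r::infinite, 'v, 'c) atom set \<Rightarrow> 'v \<Rightarrow> ('r, 'v, 'c) atom" where
  "fresh_atom q x = Atom (SOME R. R \<notin> rel ` q) 1 [Var x] ModeC"

definition attacks_var :: "('r::infinite, 'v, 'c) atom set \<Rightarrow> ('r, 'v, 'c) atom \<Rightarrow> 'v \<Rightarrow> bool" where
  "attacks_var q F x \<longleftrightarrow> attacks (insert (fresh_atom q x) q) F (fresh_atom q x)"

definition seq_proof :: "('r, 'v, 'c) atom set \<Rightarrow> 'v set \<Rightarrow> 'v \<Rightarrow> ('r, 'v, 'c) atom list \<Rightarrow> bool" where
  "seq_proof q Z w fs \<longleftrightarrow> set fs \<subseteq> q \<and>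
     (\<forall>i < length fs. key (fs ! i) \<subseteq> Z \<union> (\<Union>j<i. vars (fs ! j))) \<and>
     (\<exists>k < length fs. w \<in> vars (fs ! k))"

definition internal :: "('r::infinite, 'v, 'c) atom set \<Rightarrow> 'v set \<Rightarrow> 'v \<Rightarrow> bool" where
  "internal q Z w \<longleftrightarrow>
     (\<exists>fs. seq_proof q Z w fs \<and> (\<forall>F\<in>set fs. \<forall>y \<in> Z \<union> {w}. \<not> attacks_var q F y)) \<and>
     (\<exists>F\<in>q. Z \<subseteq> vars F)"

definition saturated :: "('r::infinite, 'v, 'c) atom set \<Rightarrow> bool" where
  "saturated q \<longleftrightarrow> (\<forall>Z w. internal q Z w \<longrightarrow> fd_entails (K (qc q)) Z {w})"

definition medge :: "('r, 'v, 'c) atom set \<Rightarrow> ('r, 'v, 'c) atom \<Rightarrow> ('r, 'v, 'c) atom \<Rightarrow> bool" where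
  "medge q F G \<longleftrightarrow> F \<in> q \<and> G \<in> q \<and> F \<noteq> G \<and> fd_entails (K (qc q)) (vars F) (key G)"

end

theory Submission
  imports Defs
begin

(* Every atom F of S has an M-graph successor inside S, and following successors in the
   finite set S closes a cycle. To find the successor: S is strongly connected with at least
   two atoms, so F attacks some G in S on a cycle of the attack graph; as there is no strong
   cycle, K(q) entails key F -> key G. Along the derivation of key G from key F, the first
   atom of S other than F to fire has its key in the closure of vars F under the atoms
   outside S. Since S is initial, none of these atoms attacks a variable of an atom of S,
   so each dependency vars F -> w needed there is internal, and saturation puts it into
   the closure under K(q^c). *)

section \<open>Functional dependencies and sequential derivations\<close>

lemma fd_closure_mono:
  assumes "\<Sigma> \<subseteq> \<Sigma>'"
  shows "fd_closure \<Sigma> X \<subseteq> fd_closure \<Sigma>' X"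
proof
  fix x assume "x \<in> fd_closure \<Sigma> X"
  then show "x \<in> fd_closure \<Sigma>' X"
    by (induction rule: fd_closure.induct) (use assms in \<open>auto intro: fd_closure.intros\<close>)
qed

lemma mem_K_iff: "(A, B) \<in> K p \<longleftrightarrow> (\<exists>H\<in>p. A = key H \<and> B = vars H)"
  by (auto simp: K_def)

lemma key_subset_vars: "key F \<subseteq> vars F"
  unfolding key_def vars_def by (auto dest: in_set_takeD)

lemma finite_key: "finite (key F)"
proof -
  have "key F = Var -` set (take (keylen F) (args F))"
    by (auto simp: key_def)
  then show ?thesis
    by (simp add: finite_vimageI inj_on_def)
qed

definition derived_vars :: "'v set \<Rightarrow> ('r, 'v, 'c) atom list \<Rightarrow> 'v set" where
  "derived_vars Z fs = Z \<union> \<Union> (vars ` set fs)"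

lemma derived_vars_Nil [simp]: "derived_vars Z [] = Z"
  by (simp add: derived_vars_def)

lemma derived_vars_append [simp]:
  "derived_vars Z (xs @ ys) = derived_vars Z xs \<union> derived_vars Z ys"
  by (auto simp: derived_vars_def)

lemma mem_derived_vars_iff: "w \<in> derived_vars Z fs \<longleftrightarrow> w \<in> Z \<or> (\<exists>H\<in>set fs. w \<in> vars H)"
  by (simp add: derived_vars_def)

inductive seq_derivation :: "('r, 'v, 'c) atom set \<Rightarrow> 'v set \<Rightarrow> ('r, 'v, 'c) atom list \<Rightarrow> bool"
  for p Z where
  Nil: "seq_derivation p Z []"
| snoc: "seq_derivation p Z fs \<Longrightarrow> H \<in> p \<Longrightarrow> key H \<subseteq> derived_vars Z fs \<Longrightarrow>
    seq_derivation p Z (fs @ [H])"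

lemma seq_derivation_append:
  assumes "seq_derivation p Z xs" and "seq_derivation p Z ys"
  shows "seq_derivation p Z (xs @ ys)"
  using assms(2)
proof (induction rule: seq_derivation.induct)
  case Nil
  then show ?case using assms(1) by simp
next
  case (snoc fs H)
  then have "key H \<subseteq> derived_vars Z (xs @ fs)"
    by auto
  with snoc show ?case
    using seq_derivation.snoc[of p Z "xs @ fs" H] by simp
qed

lemma seq_derivation_covering_finite:
  assumes "finite A" and "\<forall>a\<in>A. \<exists>fs. seq_derivation p Z fs \<and> a \<in> derived_vars Z fs"
  shows "\<exists>fs. seq_derivation p Z fs \<and> A \<subseteq> derived_vars Z fs"
  using assms
proof (induction rule: finite_induct)
  case empty
  show ?case using seq_derivation.Nil by blast
next
  case (insert a A)
  then obtain xs ys where "seq_derivation p Z xs" "A \<subseteq> derived_vars Z xs"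
    and "seq_derivation p Z ys" "a \<in> derived_vars Z ys"
    by blast
  then show ?case
    by (intro exI[of _ "xs @ ys"]) (auto intro: seq_derivation_append)
qed

lemma fd_closure_imp_seq_derivation:
  assumes "w \<in> fd_closure (K p) Z"
  shows "\<exists>fs. seq_derivation p Z fs \<and> w \<in> derived_vars Z fs"
  using assms
proof (induction rule: fd_closure.induct)
  case (base x)
  then show ?case using seq_derivation.Nil by force
next
  case (step A B y)
  from \<open>(A, B) \<in> K p\<close> obtain H where "H \<in> p" "A = key H" "B = vars H"
    by (auto simp: mem_K_iff)
  have "\<forall>a\<in>key H. \<exists>fs. seq_derivation p Z fs \<and> a \<in> derived_vars Z fs"
    using step.IH unfolding \<open>A = key H\<close> by simp
  then obtain fs where fs: "seq_derivation p Z fs" "key H \<subseteq> derived_vars Z fs"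
    using seq_derivation_covering_finite[OF finite_key] by meson
  from fs(1) \<open>H \<in> p\<close> fs(2) have "seq_derivation p Z (fs @ [H])"
    by (rule seq_derivation.snoc)
  moreover have "y \<in> derived_vars Z (fs @ [H])"
    using \<open>y \<in> B\<close> \<open>B = vars H\<close> by (simp add: mem_derived_vars_iff)
  ultimately show ?case
    by blast
qed

lemma seq_derivation_nth:
  assumes "seq_derivation p Z fs"
  shows "set fs \<subseteq> p \<and> (\<forall>i < length fs. key (fs ! i) \<subseteq> Z \<union> (\<Union>j<i. vars (fs ! j)))"
  using assms
proof (induction rule: seq_derivation.induct)
  case Nil
  then show ?case by simp
next
  case (snoc fs H)
  have prefix: "(\<Union>j<i. vars ((fs @ [H]) ! j)) = (\<Union>j<i. vars (fs ! j))" if "i \<le> length fs" for i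
    using that by (intro SUP_cong) (simp_all add: nth_append)
  have "set fs = (!) fs ` {..<length fs}"
    by (simp add: lessThan_atLeast0 nth_image)
  then have all: "(\<Union>j<length fs. vars (fs ! j)) = \<Union> (vars ` set fs)"
    by simp
  show ?case
  proof (intro conjI allI impI)
    show "set (fs @ [H]) \<subseteq> p"
      using snoc by simp
    fix i assume "i < length (fs @ [H])"
    then consider "i < length fs" | "i = length fs"
      by fastforce
    then show "key ((fs @ [H]) ! i) \<subseteq> Z \<union> (\<Union>j<i. vars ((fs @ [H]) ! j))"
    proof cases
      case 1
      then show ?thesis using snoc.IH by (simp add: nth_append prefix)
    next
      case 2
      then show ?thesis using snoc.hyps(3) by (simp add: prefix all derived_vars_def)
    qed
  qed
qed

lemma seq_derivation_imp_seq_proof: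
  assumes "seq_derivation p Z fs" and "p \<subseteq> q" and "H \<in> set fs" and "w \<in> vars H"
  shows "seq_proof q Z w fs"
  using seq_derivation_nth[OF assms(1)] assms(2-4)
  unfolding seq_proof_def in_set_conv_nth by blast

section \<open>Paths and cycles\<close>

lemma rtranclp_imp_distinct_path:
  assumes "r\<^sup>*\<^sup>* a b"
  shows "\<exists>xs. xs \<noteq> [] \<and> hd xs = a \<and> last xs = b \<and> distinct xs \<and> successively r xs"
  using assms
proof (induction rule: rtranclp_induct)
  case base
  show ?case by (intro exI[of _ "[a]"]) simp
next
  case (step b c)
  then obtain xs where xs: "xs \<noteq> []" "hd xs = a" "last xs = b" "distinct xs" "successively r xs"
    by blast
  show ?case
  proof (cases "c \<in> set xs")
    case True
    then obtain ys zs where "xs = ys @ c # zs"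
      by (meson split_list)
    with xs show ?thesis
      by (intro exI[of _ "ys @ [c]"]) (simp add: successively_append_iff hd_append split: if_splits)
  next
    case False
    with xs \<open>r b c\<close> show ?thesis
      by (intro exI[of _ "xs @ [c]"]) (simp add: successively_append_iff)
  qed
qed

lemma is_cycleI:
  assumes "length cs \<ge> 2" and "distinct cs" and "successively r cs" and "r (last cs) (hd cs)"
  shows "is_cycle r cs"
  unfolding is_cycle_def
proof (intro conjI allI impI)
  show "length cs \<ge> 2" "distinct cs"
    by (fact assms(1), fact assms(2))
  fix i assume "i < length cs"
  then consider "Suc i < length cs" | "Suc i = length cs"
    by linarith
  then show "r (cs ! i) (cs ! ((i + 1) mod length cs))"
  proof cases
    case 1
    then show ?thesis using successively_nth[OF assms(3)] by simp
  next
    case 2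
    then have "cs \<noteq> []"
      by auto
    with 2 have "cs ! i = last cs" and "(i + 1) mod length cs = 0"
      by (simp_all add: last_conv_nth flip: 2)
    with assms(4) \<open>cs \<noteq> []\<close> show ?thesis
      by (simp add: hd_conv_nth)
  qed
qed

lemma cycle_through_edge:
  assumes "r a b" and "r\<^sup>*\<^sup>* b a" and "a \<noteq> b"
  shows "\<exists>cs. is_cycle r cs \<and> hd cs = b \<and> last cs = a"
proof -
  obtain xs where xs: "xs \<noteq> []" "hd xs = b" "last xs = a" "distinct xs" "successively r xs"
    using rtranclp_imp_distinct_path[OF assms(2)] by blast
  have "length xs \<noteq> 1"
  proof
    assume "length xs = 1"
    then obtain x where "xs = [x]"
      by (metis One_nat_def length_0_conv length_Suc_conv)
    with xs(2,3) assms(3) show False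
      by simp
  qed
  moreover have "length xs \<noteq> 0"
    using xs(1) by simp
  ultimately have "length xs \<ge> 2"
    by linarith
  with xs assms(1) show ?thesis
    by (intro exI[of _ xs]) (simp add: is_cycleI)
qed

lemma finite_successors_imp_cycle:
  assumes "finite S" and "S \<noteq> {}" and "\<forall>x\<in>S. \<exists>y\<in>S. y \<noteq> x \<and> E x y"
  shows "\<exists>cs. set cs \<subseteq> S \<and> is_cycle E cs"
proof -
  define E' where "E' x y \<longleftrightarrow> x \<in> S \<and> y \<in> S \<and> E x y" for x y
  obtain f where f: "\<And>x. x \<in> S \<Longrightarrow> f x \<in> S \<and> f x \<noteq> x \<and> E x (f x)"
    using assms(3) by metis
  obtain x0 where "x0 \<in> S"
    using assms(2) by blast
  define s where "s n = (f ^^ n) x0" for n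
  have s_in: "s n \<in> S" for n
    by (induction n) (simp_all add: s_def \<open>x0 \<in> S\<close> f)
  have edge: "E' (s n) (s (Suc n))" and loopfree: "s (Suc n) \<noteq> s n" for n
    using f[OF s_in[of n]] s_in[of n] by (simp_all add: E'_def s_def)
  have path: "E'\<^sup>*\<^sup>* (s m) (s n)" if "m \<le> n" for m n
    using that
  proof (induction n rule: dec_induct)
    case (step k)
    from step.IH edge[of k] show ?case
      by (rule rtranclp.rtrancl_into_rtrancl)
  qed simp
  have "finite (range s)"
    using s_in by (intro finite_subset[OF _ assms(1)]) blast
  then have "\<not> inj s"
    using finite_imageD by fastforce
  then obtain i j where "i < j" "s i = s j"
    unfolding inj_def by (metis linorder_neqE_nat)
  then have "E'\<^sup>*\<^sup>* (s (Suc i)) (s i)"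
    using path[of "Suc i" j] by simp
  then obtain cs where cs: "is_cycle E' cs"
    using cycle_through_edge[of E', OF edge[of i]] loopfree[of i] by metis
  have "set cs \<subseteq> S"
  proof
    fix x assume "x \<in> set cs"
    then obtain k where "k < length cs" "cs ! k = x"
      by (auto simp: in_set_conv_nth)
    with cs show "x \<in> S"
      unfolding is_cycle_def E'_def by blast
  qed
  moreover have "is_cycle E cs"
    using cs unfolding is_cycle_def E'_def by blast
  ultimately show ?thesis
    by blast
qed

section \<open>Attacks\<close>

lemma plusq_mono:
  assumes "q \<subseteq> q'"
  shows "plusq q H \<subseteq> plusq q' H"
proof -
  have "K (q - {H}) \<union> K (qc q) \<subseteq> K (q' - {H}) \<union> K (qc q')"
    using assms by (auto simp: K_def qc_def)
  then show ?thesis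
    using fd_closure_mono unfolding plusq_def fd_entails_def by blast
qed

lemma vars_fresh_atom [simp]: "vars (fresh_atom q y) = {y}"
  by (simp add: fresh_atom_def vars_def)

lemma attacks_iff_successively:
  "attacks q F G \<longleftrightarrow> F \<in> q \<and> G \<in> q \<and> F \<noteq> G \<and>
     (\<exists>fs. length fs \<ge> 2 \<and> hd fs = F \<and> last fs = G \<and> set fs \<subseteq> q \<and>
        successively (\<lambda>A B. vars A \<inter> vars B - plusq q F \<noteq> {}) fs)"
  by (simp add: attacks_def successively_conv_nth)

(* An attack path from H to the fresh atom N(y) stays one when N(y) is replaced by X,
   because vars N(y) = {y} is contained in vars X. *)
lemma attacks_var_imp_attacks:
  fixes q :: "('r::infinite, 'v, 'c) atom set"
  assumes "attacks_var q H y" and "X \<in> q" and "y \<in> vars X" and "H \<noteq> X"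
  shows "attacks q H X"
proof -
  define N where "N = fresh_atom q y"
  define q' where "q' = insert N q"
  define g where "g A = (if A = N then X else A)" for A
  have "attacks q' H N"
    using assms(1) by (simp add: attacks_var_def N_def q'_def)
  then obtain fs where "H \<in> q'" "H \<noteq> N" "length fs \<ge> 2" "hd fs = H" "last fs = N" "set fs \<subseteq> q'"
    and linked: "successively (\<lambda>A B. vars A \<inter> vars B - plusq q' H \<noteq> {}) fs"
    unfolding attacks_iff_successively by blast
  have "fs \<noteq> []"
    using \<open>length fs \<ge> 2\<close> by auto
  have "vars A \<subseteq> vars (g A)" for A
    using assms(3) by (simp add: g_def N_def)
  moreover have "plusq q H \<subseteq> plusq q' H"
    by (rule plusq_mono) (auto simp: q'_def)
  ultimately have "vars (g A) \<inter> vars (g B) - plusq q H \<noteq> {}"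
    if "vars A \<inter> vars B - plusq q' H \<noteq> {}" for A B
    using that by blast
  then have "successively (\<lambda>A B. vars A \<inter> vars B - plusq q H \<noteq> {}) (map g fs)"
    unfolding successively_map using successively_mono[OF linked] by simp
  moreover have "set (map g fs) \<subseteq> q"
    using \<open>set fs \<subseteq> q'\<close> assms(2) by (auto simp: g_def q'_def)
  moreover have "hd (map g fs) = H" "last (map g fs) = X"
    using \<open>fs \<noteq> []\<close> \<open>hd fs = H\<close> \<open>last fs = N\<close> \<open>H \<noteq> N\<close>
    by (simp_all add: g_def hd_map last_map)
  moreover have "H \<in> q"
    using \<open>H \<in> q'\<close> \<open>H \<noteq> N\<close> by (simp add: q'_def)
  ultimately show ?thesis
    unfolding attacks_iff_successively
    by (intro conjI exI[of _ "map g fs"]; (fact | simp add: \<open>length fs \<ge> 2\<close> assms(2,4)))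
qed

lemma initial_component_not_attacked:
  fixes q :: "('r::infinite, 'v, 'c) atom set"
  assumes "initial_component q S" and "A \<in> q" "A \<notin> S" and "X \<in> S" "y \<in> vars X"
  shows "\<not> attacks_var q A y"
proof
  assume "attacks_var q A y"
  moreover have "X \<in> q"
    using assms(1,4) unfolding initial_component_def strong_component_def by (elim conjE) (rule subsetD)
  moreover have "A \<noteq> X"
    using assms(3,4) by blast
  ultimately have "attacks q A X"
    by (rule attacks_var_imp_attacks[OF _ _ assms(5)])
  with assms(1,4) have "A \<in> S"
    unfolding initial_component_def by blast
  with assms(3) show False ..
qed

section \<open>Initial strong components\<close>

lemma strong_component_key_entails_other_key:
  assumes "\<not> has_strong_cycle q" and "strong_component q S" and "card S \<ge> 2" and "F \<in> S"
  shows "\<exists>G\<in>S. G \<noteq> F \<and> fd_entails (K q) (key F) (key G)"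
proof -
  have connected: "(attacks q)\<^sup>*\<^sup>* F' G'" if "F' \<in> S" "G' \<in> S" for F' G'
    using assms(2) that unfolding strong_component_def by blast
  have "\<not> S \<subseteq> {F}"
  proof
    assume "S \<subseteq> {F}"
    then have "card S \<le> 1"
      using card_mono[of "{F}" S] by simp
    with assms(3) show False
      by simp
  qed
  then obtain G0 where "G0 \<in> S" "G0 \<noteq> F"
    by blast
  with connected[OF assms(4)] obtain G where "attacks q F G" and "(attacks q)\<^sup>*\<^sup>* G G0"
    by (metis converse_rtranclpE)
  from this(2) connected[OF \<open>G0 \<in> S\<close> assms(4)] have returns: "(attacks q)\<^sup>*\<^sup>* G F"
    by (rule rtranclp_trans)
  have "G \<in> q" "G \<noteq> F"
    using \<open>attacks q F G\<close> by (auto simp: attacks_def)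
  have "G \<in> S"
    using assms(2,4) \<open>G \<in> q\<close> \<open>attacks q F G\<close> returns
    unfolding strong_component_def by blast
  moreover have "fd_entails (K q) (key F) (key G)"
  proof (rule ccontr)
    assume "\<not> fd_entails (K q) (key F) (key G)"
    with \<open>attacks q F G\<close> have strong: "strong_attack q F G"
      by (simp add: strong_attack_def)
    obtain cs where cs: "is_cycle (attacks q) cs" "hd cs = G" "last cs = F"
      using cycle_through_edge[OF \<open>attacks q F G\<close> returns] \<open>G \<noteq> F\<close> by metis
    then have "cs \<noteq> []" "length cs - 1 < length cs"
      by (auto simp: is_cycle_def)
    with cs strong have "strong_attack q (cs ! (length cs - 1)) (cs ! ((length cs - 1 + 1) mod length cs))"
      by (simp add: last_conv_nth hd_conv_nth)
    with cs(1) \<open>length cs - 1 < length cs\<close> have "has_strong_cycle q"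
      unfolding has_strong_cycle_def by blast
    with assms(1) show False ..
  qed
  ultimately show ?thesis
    using \<open>G \<noteq> F\<close> by blast
qed

lemma fd_closure_outside_reaches_key:
  assumes "fd_entails (K q) (key F) (key G)" and "G \<in> S" and "G \<noteq> F"
  shows "\<exists>H\<in>S. H \<noteq> F \<and> key H \<subseteq> fd_closure (K (q - S)) (vars F)"
proof (rule ccontr)
  assume none: "\<not> ?thesis"
  have "z \<in> fd_closure (K (q - S)) (vars F)" if "z \<in> fd_closure (K q) (key F)" for z
    using that
  proof (induction rule: fd_closure.induct)
    case (base x)
    then have "x \<in> vars F"
      by (rule subsetD[OF key_subset_vars])
    then show ?case
      by (rule fd_closure.base)
  next
    case (step A B y)
    from \<open>(A, B) \<in> K q\<close> obtain H where "H \<in> q" "A = key H" "B = vars H"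
      by (auto simp: mem_K_iff)
    have closed: "key H \<subseteq> fd_closure (K (q - S)) (vars F)"
      using step.IH unfolding \<open>A = key H\<close> by blast
    show ?case
    proof (cases "H \<in> S")
      case True
      with none closed have "H = F"
        by blast
      with \<open>y \<in> B\<close> \<open>B = vars H\<close> show ?thesis
        by (simp add: fd_closure.base)
    next
      case False
      with \<open>H \<in> q\<close> \<open>A = key H\<close> \<open>B = vars H\<close> have "(A, B) \<in> K (q - S)"
        by (auto simp: K_def)
      then show ?thesis
        by (rule fd_closure.step) (use closed \<open>A = key H\<close> \<open>y \<in> B\<close> in auto)
    qed
  qed
  then have "key G \<subseteq> fd_closure (K (q - S)) (vars F)"
    using assms(1) unfolding fd_entails_def by blast
  with assms(2,3) none show False
    by blast
qed

lemma medge_if_key_in_closure_outside: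
  fixes q :: "('r::infinite, 'v, 'c) atom set"
  assumes "saturated q" and "initial_component q S" and "F \<in> S" "G \<in> S"
    and "G \<noteq> F" and "key G \<subseteq> fd_closure (K (q - S)) (vars F)"
  shows "medge q F G"
proof -
  have "S \<subseteq> q"
    using assms(2) by (simp add: initial_component_def strong_component_def)
  with assms(3,4) have "F \<in> q" "G \<in> q"
    by blast+
  have "w \<in> fd_closure (K (qc q)) (vars F)" if w_key: "w \<in> key G" for w
  proof (cases "w \<in> vars F")
    case True
    then show ?thesis by (rule fd_closure.base)
  next
    case False
    from w_key assms(6) have "w \<in> fd_closure (K (q - S)) (vars F)"
      by blast
    from fd_closure_imp_seq_derivation[OF this] obtain fs
      where fs: "seq_derivation (q - S) (vars F) fs" "w \<in> derived_vars (vars F) fs"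
      by blast
    with False obtain H where "H \<in> set fs" "w \<in> vars H"
      unfolding mem_derived_vars_iff by blast
    with fs(1) have "seq_proof q (vars F) w fs"
      by (intro seq_derivation_imp_seq_proof) auto
    moreover have "\<not> attacks_var q A y" if A_in: "A \<in> set fs" and y_in: "y \<in> vars F \<union> {w}" for A y
    proof -
      have "A \<in> q" "A \<notin> S"
        using seq_derivation_nth[OF fs(1)] A_in by auto
      moreover obtain X where "X \<in> S" "y \<in> vars X"
      proof (cases "y \<in> vars F")
        case True
        with assms(3) show ?thesis by (rule that)
      next
        case False
        with y_in have "y \<in> vars G"
          using subsetD[OF key_subset_vars w_key] by simp
        with assms(4) show ?thesis by (rule that)
      qed
      ultimately show ?thesis
        by (rule initial_component_not_attacked[OF assms(2)])
    qed
    ultimately have "internal q (vars F) w"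
      using \<open>F \<in> q\<close> unfolding internal_def by (intro conjI exI[of _ fs] bexI[of _ F]) blast+
    with assms(1) show ?thesis
      unfolding saturated_def fd_entails_def by blast
  qed
  with \<open>F \<in> q\<close> \<open>G \<in> q\<close> assms(5) show ?thesis
    unfolding medge_def fd_entails_def by blast
qed

theorem lemma11:
  fixes q S :: "('r::infinite, 'v, 'c) atom set"
  assumes "sjf_query q"
    and "saturated q"
    and "\<not> has_strong_cycle q"
    and "initial_component q S"
    and "card S \<ge> 2"
  shows "\<exists>cs. set cs \<subseteq> S \<and> is_cycle (medge q) cs"
proof -
  have "finite S" "S \<noteq> {}"
    using assms(5) by (auto intro: card_ge_0_finite)
  have "\<exists>G\<in>S. G \<noteq> F \<and> medge q F G" if "F \<in> S" for F
  proof -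
    obtain G where "G \<in> S" "G \<noteq> F" "fd_entails (K q) (key F) (key G)"
      using strong_component_key_entails_other_key assms(3-5) \<open>F \<in> S\<close>
      unfolding initial_component_def by blast
    then obtain H where "H \<in> S" "H \<noteq> F" "key H \<subseteq> fd_closure (K (q - S)) (vars F)"
      using fd_closure_outside_reaches_key by blast
    with assms(2,4) \<open>F \<in> S\<close> show ?thesis
      using medge_if_key_in_closure_outside by blast
  qed
  with \<open>finite S\<close> \<open>S \<noteq> {}\<close> show ?thesis
    by (intro finite_successors_imp_cycle) auto
qed

end
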